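(* Let $X$ be a countable discrete metric space and $d\in D(X,X)$ such that the identity operator of $l^2(X)$ belongs to $M_d(X,X)$. Then $d$ and $d^0$ are almost isometric, i.e. there is $K\ge0$ with $|d(x_1,x_2')-d^0(x_1,x_2')|\le K$ for all $x_1,x_2\in X$.
   Context: $D(X,X)$ is the set of metrics on $X\sqcup X'$, where $X'=\{x':x\in X\}$ is a second copy of $X$, restricting to $d_X$ on each copy; an operator $T$ on $l^2(X)$ is viewed as a map from the first to the second copy, with entries $T_{x'_2x_1}=\langle T\delta_{x_1},\delta_{x_2}\rangle$. $T$ has propagation less than $L$ w.r.t. $d$ if its entry vanishes whenever $d(x_1,x_2')\ge L$; $M_d(X,X)$ is the norm closure of bounded finite-propagation operators. $d^0\in D(X,X)$ is the metric with $d^0(x_1,x_2')=d_X(x_1,x_2)+1$; note $M_{d^0}(X,X)=C^*_u(X)$. *)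

theory Defs
  imports "HOL-Analysis.Analysis"
begin

definition is_metric :: "('b \<Rightarrow> 'b \<Rightarrow> real) \<Rightarrow> bool" where
  "is_metric \<rho> \<longleftrightarrow>
     (\<forall>x y. \<rho> x y = 0 \<longleftrightarrow> x = y) \<and>
     (\<forall>x y. \<rho> x y = \<rho> y x) \<and>
     (\<forall>x y z. \<rho> x z \<le> \<rho> x y + \<rho> y z)"

definition discrete_metric :: "('a \<Rightarrow> 'a \<Rightarrow> real) \<Rightarrow> bool" where
  "discrete_metric dX \<longleftrightarrow> (\<forall>x. \<exists>r>0. \<forall>y. y \<noteq> x \<longrightarrow> r \<le> dX x y)"

text \<open>D(X,X): metrics on X \<sqcup> X' (Inl = first copy X, Inr = second copy X')
  restricting to dX on each copy.\<close>
definition DXX :: "('a \<Rightarrow> 'a \<Rightarrow> real) \<Rightarrow> (('a + 'a) \<Rightarrow> ('a + 'a) \<Rightarrow> real) set" where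
  "DXX dX = {d. is_metric d \<and> (\<forall>x y. d (Inl x) (Inl y) = dX x y) \<and>
                              (\<forall>x y. d (Inr x) (Inr y) = dX x y)}"

fun d0 :: "('a \<Rightarrow> 'a \<Rightarrow> real) \<Rightarrow> ('a + 'a) \<Rightarrow> ('a + 'a) \<Rightarrow> real" where
  "d0 dX (Inl x) (Inl y) = dX x y"
| "d0 dX (Inr x) (Inr y) = dX x y"
| "d0 dX (Inl x) (Inr y) = dX x y + 1"
| "d0 dX (Inr x) (Inl y) = dX x y + 1"

definition ell2 :: "('a \<Rightarrow> complex) set" where
  "ell2 = {f. (\<lambda>x. (cmod (f x))\<^sup>2) summable_on UNIV}"

definition l2norm :: "('a \<Rightarrow> complex) \<Rightarrow> real" where
  "l2norm f = sqrt (\<Sum>\<^sub>\<infinity>x. (cmod (f x))\<^sup>2)"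

definition delta :: "'a \<Rightarrow> 'a \<Rightarrow> complex" where
  "delta x = (\<lambda>y. if y = x then 1 else 0)"

text \<open>Bounded (complex-linear) operators on l^2(X); only their behaviour on l^2(X) matters.\<close>
definition bounded_op :: "(('a \<Rightarrow> complex) \<Rightarrow> ('a \<Rightarrow> complex)) \<Rightarrow> bool" where
  "bounded_op T \<longleftrightarrow>
     (\<forall>f\<in>ell2. T f \<in> ell2) \<and>
     (\<forall>f\<in>ell2. \<forall>g\<in>ell2. T (\<lambda>x. f x + g x) = (\<lambda>x. T f x + T g x)) \<and>
     (\<forall>f\<in>ell2. \<forall>c. T (\<lambda>x. c * f x) = (\<lambda>x. c * T f x)) \<and>
     (\<exists>C. \<forall>f\<in>ell2. l2norm (T f) \<le> C * l2norm f)"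

definition opnorm :: "(('a \<Rightarrow> complex) \<Rightarrow> ('a \<Rightarrow> complex)) \<Rightarrow> real" where
  "opnorm T = Sup {l2norm (T f) | f. f \<in> ell2 \<and> l2norm f \<le> 1}"

text \<open>Matrix entry T_{x2' x1} = <T delta_{x1}, delta_{x2}>.\<close>
definition entry :: "(('a \<Rightarrow> complex) \<Rightarrow> ('a \<Rightarrow> complex)) \<Rightarrow> 'a \<Rightarrow> 'a \<Rightarrow> complex" where
  "entry T x2 x1 = T (delta x1) x2"

definition propagation_less ::
  "(('a + 'a) \<Rightarrow> ('a + 'a) \<Rightarrow> real) \<Rightarrow> real \<Rightarrow> (('a \<Rightarrow> complex) \<Rightarrow> ('a \<Rightarrow> complex)) \<Rightarrow> bool" where
  "propagation_less d L T \<longleftrightarrow> (\<forall>x1 x2. d (Inl x1) (Inr x2) \<ge> L \<longrightarrow> entry T x2 x1 = 0)"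

definition finite_propagation ::
  "(('a + 'a) \<Rightarrow> ('a + 'a) \<Rightarrow> real) \<Rightarrow> (('a \<Rightarrow> complex) \<Rightarrow> ('a \<Rightarrow> complex)) \<Rightarrow> bool" where
  "finite_propagation d T \<longleftrightarrow> (\<exists>L. propagation_less d L T)"

definition Md :: "(('a + 'a) \<Rightarrow> ('a + 'a) \<Rightarrow> real) \<Rightarrow> (('a \<Rightarrow> complex) \<Rightarrow> ('a \<Rightarrow> complex)) set" where
  "Md d = {T. bounded_op T \<and>
              (\<forall>\<epsilon>>0. \<exists>S. bounded_op S \<and> finite_propagation d S \<and>
                          opnorm (\<lambda>f x. T f x - S f x) < \<epsilon>)}"

end

theory Submission
  imports Defs
begin

text \<open>If I is approximated within norm 1 by an operator S of propagation less than L, then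
  every diagonal entry of S is nonzero (an entry of I - S has modulus at most the norm of
  I - S), so d(x, x') < L for all x. The triangle inequality through x1' and x2 then shows
  that d(x1, x2') differs from dX(x1, x2) by at most L.\<close>

lemma cmod_diff_square_le: "(cmod (a - b))\<^sup>2 \<le> 2 * (cmod a)\<^sup>2 + 2 * (cmod b)\<^sup>2"
proof -
  have "(cmod (a - b))\<^sup>2 \<le> (cmod a + cmod b)\<^sup>2"
    by (intro power_mono norm_triangle_ineq4) auto
  also have "\<dots> \<le> 2 * (cmod a)\<^sup>2 + 2 * (cmod b)\<^sup>2"
    by (smt (verit) sum_squares_bound power2_sum)
  finally show ?thesis .
qed

lemma delta_in_ell2: "delta x \<in> ell2"
proof -
  have sq: "(\<lambda>y. (cmod (delta x y))\<^sup>2) = (\<lambda>y. if y = x then 1 else 0)"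
    by (auto simp: delta_def)
  have "(\<lambda>y. (if y = x then 1 else 0) :: real) summable_on UNIV"
    by (subst summable_on_cong_neutral[where T="{x}"]) auto
  then show ?thesis by (simp add: ell2_def sq)
qed

lemma l2norm_delta: "l2norm (delta x) = 1"
proof -
  have "(\<Sum>\<^sub>\<infinity>y. (cmod (delta x y))\<^sup>2) = (\<Sum>\<^sub>\<infinity>y\<in>{x}. (cmod (delta x y))\<^sup>2)"
    by (rule infsum_cong_neutral) (auto simp: delta_def)
  then show ?thesis by (simp add: l2norm_def delta_def)
qed

lemma l2norm_nonneg: "l2norm f \<ge> 0"
  unfolding l2norm_def by (auto intro!: infsum_nonneg)

lemma l2norm_square: "(l2norm f)\<^sup>2 = (\<Sum>\<^sub>\<infinity>x. (cmod (f x))\<^sup>2)"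
  unfolding l2norm_def by (simp add: infsum_nonneg)

lemma cmod_le_l2norm:
  assumes "f \<in> ell2"
  shows "cmod (f x) \<le> l2norm f"
proof -
  have "(\<Sum>\<^sub>\<infinity>y\<in>{x}. (cmod (f y))\<^sup>2) \<le> (\<Sum>\<^sub>\<infinity>y. (cmod (f y))\<^sup>2)"
    using assms unfolding ell2_def by (intro infsum_mono_neutral) auto
  then show ?thesis unfolding l2norm_def using real_le_rsqrt by auto
qed

lemma
  assumes f: "f \<in> ell2" and g: "g \<in> ell2"
  shows ell2_diff: "(\<lambda>x. f x - g x) \<in> ell2"
    and l2norm_diff_square_le:
      "(l2norm (\<lambda>x. f x - g x))\<^sup>2 \<le> 2 * (l2norm f)\<^sup>2 + 2 * (l2norm g)\<^sup>2"
proof -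
  have sf: "(\<lambda>x. (cmod (f x))\<^sup>2) summable_on UNIV"
    and sg: "(\<lambda>x. (cmod (g x))\<^sup>2) summable_on UNIV"
    using f g unfolding ell2_def by auto
  have sB: "(\<lambda>x. 2 * (cmod (f x))\<^sup>2 + 2 * (cmod (g x))\<^sup>2) summable_on UNIV"
    by (intro summable_on_add summable_on_cmult_right sf sg)
  have sD: "(\<lambda>x. (cmod (f x - g x))\<^sup>2) summable_on UNIV"
    by (rule summable_on_comparison_test[OF sB]) (auto intro: cmod_diff_square_le)
  then show "(\<lambda>x. f x - g x) \<in> ell2" unfolding ell2_def by simp
  have "(\<Sum>\<^sub>\<infinity>x. (cmod (f x - g x))\<^sup>2) \<le> (\<Sum>\<^sub>\<infinity>x. 2 * (cmod (f x))\<^sup>2 + 2 * (cmod (g x))\<^sup>2)"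
    by (rule infsum_mono[OF sD sB cmod_diff_square_le])
  also have "\<dots> = 2 * (\<Sum>\<^sub>\<infinity>x. (cmod (f x))\<^sup>2) + 2 * (\<Sum>\<^sub>\<infinity>x. (cmod (g x))\<^sup>2)"
    by (simp add: infsum_add summable_on_cmult_right sf sg infsum_cmult_right)
  finally show "(l2norm (\<lambda>x. f x - g x))\<^sup>2 \<le> 2 * (l2norm f)\<^sup>2 + 2 * (l2norm g)\<^sup>2"
    by (simp only: l2norm_square)
qed

lemma bounded_op_maps_ell2: "bounded_op T \<Longrightarrow> f \<in> ell2 \<Longrightarrow> T f \<in> ell2"
  unfolding bounded_op_def by simp

lemma bounded_op_bounded_on_unit_ball:
  assumes "bounded_op T"
  obtains C where "\<And>f. f \<in> ell2 \<Longrightarrow> l2norm f \<le> 1 \<Longrightarrow> l2norm (T f) \<le> C"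
proof -
  from assms obtain C where C: "\<And>f. f \<in> ell2 \<Longrightarrow> l2norm (T f) \<le> C * l2norm f"
    unfolding bounded_op_def by blast
  have "l2norm (T f) \<le> \<bar>C\<bar>" if "f \<in> ell2" "l2norm f \<le> 1" for f
  proof -
    have "C * l2norm f \<le> \<bar>C\<bar> * l2norm f"
      by (rule mult_right_mono[OF abs_ge_self l2norm_nonneg])
    also have "\<dots> \<le> \<bar>C\<bar>"
      using that l2norm_nonneg by (simp add: mult_left_le)
    finally show ?thesis using C that by force
  qed
  then show ?thesis using that by blast
qed

lemma bdd_above_unit_ball_norms_diff:
  assumes "bounded_op T" "bounded_op S"
  shows "bdd_above {l2norm ((\<lambda>f x. T f x - S f x) f) | f. f \<in> ell2 \<and> l2norm f \<le> 1}"
proof -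
  obtain CT where CT: "\<And>f. f \<in> ell2 \<Longrightarrow> l2norm f \<le> 1 \<Longrightarrow> l2norm (T f) \<le> CT"
    using bounded_op_bounded_on_unit_ball[OF assms(1)] by blast
  obtain CS where CS: "\<And>f. f \<in> ell2 \<Longrightarrow> l2norm f \<le> 1 \<Longrightarrow> l2norm (S f) \<le> CS"
    using bounded_op_bounded_on_unit_ball[OF assms(2)] by blast
  have "l2norm (\<lambda>x. T f x - S f x) \<le> sqrt (2 * CT\<^sup>2 + 2 * CS\<^sup>2)"
    if f: "f \<in> ell2" "l2norm f \<le> 1" for f
  proof -
    have in2: "T f \<in> ell2" "S f \<in> ell2"
      using assms f(1) by (auto intro: bounded_op_maps_ell2)
    have "(l2norm (T f))\<^sup>2 \<le> CT\<^sup>2" "(l2norm (S f))\<^sup>2 \<le> CS\<^sup>2"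
      using CT[OF f] CS[OF f] l2norm_nonneg by (auto intro!: power_mono)
    then have "(l2norm (\<lambda>x. T f x - S f x))\<^sup>2 \<le> 2 * CT\<^sup>2 + 2 * CS\<^sup>2"
      using l2norm_diff_square_le[OF in2] by linarith
    then show ?thesis using real_le_rsqrt by blast
  qed
  then show ?thesis by (intro bdd_aboveI) blast
qed

lemma cmod_entry_le_opnorm:
  assumes "bdd_above {l2norm (T f) | f. f \<in> ell2 \<and> l2norm f \<le> 1}"
    and "T (delta x) \<in> ell2"
  shows "cmod (entry T y x) \<le> opnorm T"
proof -
  have "cmod (entry T y x) \<le> l2norm (T (delta x))"
    unfolding entry_def by (rule cmod_le_l2norm[OF assms(2)])
  also have "\<dots> \<le> opnorm T"
    unfolding opnorm_def
    by (rule cSup_upper[OF _ assms(1)]) (auto simp: delta_in_ell2 l2norm_delta)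
  finally show ?thesis .
qed

lemma cmod_entry_diff_le_opnorm:
  assumes "bounded_op T" "bounded_op S"
  shows "cmod (entry T y x - entry S y x) \<le> opnorm (\<lambda>f x. T f x - S f x)"
proof -
  have "T (delta x) \<in> ell2" "S (delta x) \<in> ell2"
    using assms by (simp_all add: bounded_op_maps_ell2 delta_in_ell2)
  then have "(\<lambda>y. T (delta x) y - S (delta x) y) \<in> ell2"
    by (rule ell2_diff)
  then have "cmod (entry (\<lambda>f x. T f x - S f x) y x) \<le> opnorm (\<lambda>f x. T f x - S f x)"
    by (rule cmod_entry_le_opnorm[OF bdd_above_unit_ball_norms_diff[OF assms]])
  then show ?thesis unfolding entry_def .
qed

lemma DXX_cross_dist_close:
  assumes "d \<in> DXX dX" and diag: "\<And>x. d (Inl x) (Inr x) \<le> L"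
  shows "\<bar>d (Inl x1) (Inr x2) - dX x1 x2\<bar> \<le> L"
proof -
  from assms(1) have m: "is_metric d"
    and l: "d (Inl x1) (Inl x2) = dX x1 x2" and r: "d (Inr x1) (Inr x2) = dX x1 x2"
    unfolding DXX_def by blast+
  have tri: "\<And>x y z. d x z \<le> d x y + d y z" and sym: "\<And>x y. d x y = d y x"
    using m unfolding is_metric_def by blast+
  have "d (Inl x1) (Inr x2) \<le> d (Inl x1) (Inr x1) + d (Inr x1) (Inr x2)"
    and "d (Inl x1) (Inl x2) \<le> d (Inl x1) (Inr x2) + d (Inr x2) (Inl x2)"
    by (rule tri)+
  then show ?thesis
    using diag[of x1] diag[of x2] sym[of "Inr x2" "Inl x2"] l r by linarith
qed

theorem lemma4p1:
  fixes dX :: "'a \<Rightarrow> 'a \<Rightarrow> real"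
    and d :: "('a + 'a) \<Rightarrow> ('a + 'a) \<Rightarrow> real"
  assumes "countable (UNIV :: 'a set)"
    and "is_metric dX"
    and "discrete_metric dX"
    and "d \<in> DXX dX"
    and "(\<lambda>f. f) \<in> Md d"
  shows "\<exists>K\<ge>0. \<forall>x1 x2. \<bar>d (Inl x1) (Inr x2) - d0 dX (Inl x1) (Inr x2)\<bar> \<le> K"
proof -
  have id: "bounded_op (\<lambda>f :: 'a \<Rightarrow> complex. f)"
    and approx: "\<forall>\<epsilon>>0. \<exists>S. bounded_op S \<and> finite_propagation d S \<and>
                          opnorm (\<lambda>f x. f x - S f x) < \<epsilon>"
    using assms(5) by (simp_all add: Md_def)
  obtain S L where S: "bounded_op S" and L: "propagation_less d L S"
    and close: "opnorm (\<lambda>f x. f x - S f x) < 1"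
    using approx zero_less_one unfolding finite_propagation_def by blast
  have "d (Inl x) (Inr x) \<le> \<bar>L\<bar>" for x
  proof -
    have "cmod (1 - entry S x x) < 1"
      using cmod_entry_diff_le_opnorm[OF id S, of x x] close
      by (simp add: entry_def delta_def)
    then have "entry S x x \<noteq> 0" by auto
    then have "d (Inl x) (Inr x) < L"
      using L unfolding propagation_less_def by (meson not_le)
    then show ?thesis by linarith
  qed
  then have close_dX: "\<bar>d (Inl x1) (Inr x2) - dX x1 x2\<bar> \<le> \<bar>L\<bar>" for x1 x2
    by (rule DXX_cross_dist_close[OF assms(4)])
  have "\<bar>d (Inl x1) (Inr x2) - d0 dX (Inl x1) (Inr x2)\<bar> \<le> \<bar>L\<bar> + 1" for x1 x2
    using close_dX[of x1 x2] unfolding d0.simps by linarith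
  moreover have "0 \<le> \<bar>L\<bar> + 1" by simp
  ultimately show ?thesis by blast
qed

end
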